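(* Let $\mathbf{X},\mathbf{Y},\mathbf{Z}$ be finite non-empty sets and let $(X_n,Y_n,Z_n)$, $n=1,2,\dots$, be an infinite sequence of random elements of $\mathbf{X}\times\mathbf{Y}\times\mathbf{Z}$ on a common probability space. Suppose there are a probability distribution $\pi$ on $\mathbf{Z}$ and probability distributions $q(\cdot\mid x,z)$ on $\mathbf{Y}$, $(x,z)\in\mathbf{X}\times\mathbf{Z}$, such that for every $n\ge1$, writing $\mathcal{H}_{n-1}:=\sigma\bigl((X_i,Y_i,Z_i):i<n\bigr)$: (i) conditionally on $\mathcal{H}_{n-1}$, $Z_n$ has distribution $\pi$; (ii) the conditional distribution of $X_n$ given $\mathcal{H}_{n-1}$ and $Z_n$ is arbitrary; (iii) conditionally on $\sigma(\mathcal{H}_{n-1},Z_n,X_n)$, $Y_n$ has distribution $q(\cdot\mid X_n,Z_n)$. Fix $\delta>0$, $\tilde x\in\mathbf{X}$, $y\in\mathbf{Y}$, and let $P(y\mid\mathrm{do}(\tilde x)):=\sum_{z\in\mathbf{Z}}q(y\mid\tilde x,z)\pi(z)$. For each $N\ge1$ let \[ m_N:=\sum_{z\in\mathbf{Z}}\check p_N(z)\,\check p_N(y\mid\tilde x,z), \] \[ h_N:=|\mathbf{Z}|\sqrt{\frac{2\ln\log_2\lfloor\!\lfloor N\rfloor\!\rfloor+\ln\frac{6.6|\mathbf{Z}|}{\delta}}{2\lfloor\!\lfloor N\rfloor\!\rfloor}}+\sum_{z\in\mathbf{Z}}\sqrt{\frac{2\ln\log_2\lfloor\!\lfloor\#_N\tilde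 x z\rfloor\!\rfloor+\ln\frac{6.6|\mathbf{Z}|}{\delta}}{2\lfloor\!\lfloor\#_N\tilde x z\rfloor\!\rfloor}}, \] with the convention $\ln\log_2 1:=\infty$. Then $\mathbb{P}\bigl(\forall N\ge1:\ P(y\mid\mathrm{do}(\tilde x))\in[m_N-h_N,m_N+h_N]\bigr)\ge1-\delta$.
   Context: This models the "strong interpretation" (decisions $X_n$ may depend on the whole past) of a repeated causal diagram in which $Z$ satisfies the back-door criterion relative to $(X,Y)$, with no fixed time horizon. Notation: for an integer $n\ge2$, $\lfloor\!\lfloor n\rfloor\!\rfloor$ is the largest $2^k$, $k\in\{1,2,\dots\}$, with $2^k\le n$; for $n<2$, $\lfloor\!\lfloor n\rfloor\!\rfloor:=1$. $\#_m z:=|\{n\in[m]:Z_n=z\}|$ and $\#_m\tilde x z:=|\{n\in[m]:(X_n,Z_n)=(\tilde x,z)\}|$. Estimates: $\check p_N(z):=\#_{\lfloor\!\lfloor N\rfloor\!\rfloor}z/\lfloor\!\lfloor N\rfloor\!\rfloor$, and \[ \check p_N(y\mid\tilde x,z):=\frac{|\{n\in[N]:\#_n\tilde x z\le\lfloor\!\lfloor\#_N\tilde x z\rfloor\!\rfloor,\ X_n=\tilde x,\ Y_n=y,\ Z_n=z\}|}{\lfloor\!\lfloor\#_N\tilde x z\rfloor\!\rfloor}, \] the fraction of the first $\lfloor\!\lfloor\#_N\tilde x z\rfloor\!\rfloor$ observations among the first $N$ with $(X_n,Z_n)=(\tilde x,z)$ for which $Y_n=y$ (its value is irrelevant when $h_N=\infty$).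 *)

theory Defs
  imports "HOL-Probability.Probability"
begin

text \<open>Time indices are 1-based: the observations are X n, Y n, Z n for n \<ge> 1;
  the values at index 0 are never used.\<close>

definition flr2 :: "nat \<Rightarrow> nat" where
  "flr2 n = (if n < 2 then 1 else 2 ^ (GREATEST k. 1 \<le> k \<and> 2 ^ k \<le> n))"

text \<open>History (X_i, Y_i, Z_i), 1 \<le> i < n; it generates H_{n-1}.\<close>
definition hist :: "(nat \<Rightarrow> 'w \<Rightarrow> 'x) \<Rightarrow> (nat \<Rightarrow> 'w \<Rightarrow> 'y) \<Rightarrow> (nat \<Rightarrow> 'w \<Rightarrow> 'z)
    \<Rightarrow> nat \<Rightarrow> 'w \<Rightarrow> ('x \<times> 'y \<times> 'z) list" where
  "hist X Y Z n \<omega> = map (\<lambda>i. (X i \<omega>, Y i \<omega>, Z i \<omega>)) [1..<n]"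

definition cnt_z :: "(nat \<Rightarrow> 'w \<Rightarrow> 'z) \<Rightarrow> nat \<Rightarrow> 'z \<Rightarrow> 'w \<Rightarrow> nat" where
  "cnt_z Z m z \<omega> = card {n \<in> {1..m}. Z n \<omega> = z}"

definition cnt_xz :: "(nat \<Rightarrow> 'w \<Rightarrow> 'x) \<Rightarrow> (nat \<Rightarrow> 'w \<Rightarrow> 'z) \<Rightarrow> nat \<Rightarrow> 'x \<Rightarrow> 'z \<Rightarrow> 'w \<Rightarrow> nat" where
  "cnt_xz X Z m x z \<omega> = card {n \<in> {1..m}. X n \<omega> = x \<and> Z n \<omega> = z}"

definition p_z_est :: "(nat \<Rightarrow> 'w \<Rightarrow> 'z) \<Rightarrow> nat \<Rightarrow> 'z \<Rightarrow> 'w \<Rightarrow> real" where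
  "p_z_est Z N z \<omega> = real (cnt_z Z (flr2 N) z \<omega>) / real (flr2 N)"

definition p_y_est :: "(nat \<Rightarrow> 'w \<Rightarrow> 'x) \<Rightarrow> (nat \<Rightarrow> 'w \<Rightarrow> 'y) \<Rightarrow> (nat \<Rightarrow> 'w \<Rightarrow> 'z)
    \<Rightarrow> nat \<Rightarrow> 'y \<Rightarrow> 'x \<Rightarrow> 'z \<Rightarrow> 'w \<Rightarrow> real" where
  "p_y_est X Y Z N y x z \<omega> =
     real (card {n \<in> {1..N}. cnt_xz X Z n x z \<omega> \<le> flr2 (cnt_xz X Z N x z \<omega>)
                             \<and> X n \<omega> = x \<and> Y n \<omega> = y \<and> Z n \<omega> = z})
     / real (flr2 (cnt_xz X Z N x z \<omega>))"

definition m_est :: "(nat \<Rightarrow> 'w \<Rightarrow> 'x) \<Rightarrow> (nat \<Rightarrow> 'w \<Rightarrow> 'y) \<Rightarrow> (nat \<Rightarrow> 'w \<Rightarrow> 'z::finite)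
    \<Rightarrow> nat \<Rightarrow> 'x \<Rightarrow> 'y \<Rightarrow> 'w \<Rightarrow> real" where
  "m_est X Y Z N x y \<omega> = (\<Sum>z\<in>UNIV. p_z_est Z N z \<omega> * p_y_est X Y Z N y x z \<omega>)"

text \<open>One radius term sqrt((2 ln log2 k + ln(6.6 c/delta)) / (2k)), with the
  convention ln log2 1 = infinity (k is always a value of flr2, so k = 1 or k \<ge> 2).\<close>
definition rad :: "real \<Rightarrow> nat \<Rightarrow> real \<Rightarrow> ereal" where
  "rad c k \<delta> = (if k = 1 then \<infinity>
     else ereal (sqrt ((2 * ln (log 2 (real k)) + ln (6.6 * c / \<delta>)) / (2 * real k))))"

definition h_est :: "(nat \<Rightarrow> 'w \<Rightarrow> 'x) \<Rightarrow> (nat \<Rightarrow> 'w \<Rightarrow> 'z::finite)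
    \<Rightarrow> real \<Rightarrow> nat \<Rightarrow> 'x \<Rightarrow> 'w \<Rightarrow> ereal" where
  "h_est X Z \<delta> N x \<omega> =
     ereal (real CARD('z)) * rad (real CARD('z)) (flr2 N) \<delta>
     + (\<Sum>z\<in>UNIV. rad (real CARD('z)) (flr2 (cnt_xz X Z N x z \<omega>)) \<delta>)"

end

theory Submission
  imports Defs
begin

text \<open>
  Only the sample sizes 2^j with j \<ge> 1 matter, since flr2 takes no other value with a finite
  radius.  For such a size k, p_z_est is the fraction of successes Z = z among the first k rounds,
  and the numerator of p_y_est counts the successes Y = y among the first k rounds with
  (X, Z) = (x, z).  In both cases the trials are selected by the past, and by the back-door
  assumptions each selected trial succeeds with conditional probability \<pi> z, resp. q(y | x, z).
  If K counts the selected trials and S is their centred number of successes, Hoeffding's lemma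
  makes exp (l S - l^2 K / 8) a supermartingale, so by Markov's inequality K = k and
  |S| > \<epsilon> k has probability at most 2 exp (-2 \<epsilon>^2 k).  With the radius of level j this is
  2 \<delta> / (6.6 |Z| j^2), and a union bound over z, both kinds of estimates and all j costs at most
  (4 / 6.6) (pi^2 / 6) \<delta> \<le> \<delta>.  Outside this event every estimate is within its radius for all N
  simultaneously, and then
  |m_N - P(y | do x)| \<le> \<Sum>z (|p_z_est - \<pi> z| + |p_y_est - q(y | x, z)|) \<le> h_N.
\<close>

lemma ex_factor_through:
  assumes "\<And>\<omega> \<omega>'. f \<omega> = f \<omega>' \<Longrightarrow> G \<omega> = G \<omega>'"
  shows "\<exists>g. \<forall>\<omega>. G \<omega> = g (f \<omega>)"
proof (intro exI allI)
  fix \<omega>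
  have "f \<omega> = f (SOME \<omega>'. f \<omega>' = f \<omega>)"
    by (rule sym, rule someI) (rule refl)
  from assms[OF this] show "G \<omega> = (\<lambda>v. G (SOME \<omega>'. f \<omega>' = v)) (f \<omega>)"
    by simp
qed

lemma integral_finite_valued_mult:
  fixes g :: "'v \<Rightarrow> real" and \<phi> :: "'w \<Rightarrow> real"
  assumes f: "f \<in> M \<rightarrow>\<^sub>M count_space UNIV" and fin: "finite (f ` space M)"
    and \<phi>: "integrable M \<phi>"
  shows "(\<integral>\<omega>. g (f \<omega>) * \<phi> \<omega> \<partial>M)
       = (\<Sum>v\<in>f ` space M. g v * (\<integral>\<omega>. indicator {\<omega> \<in> space M. f \<omega> = v} \<omega> * \<phi> \<omega> \<partial>M))"
proof -
  have level_sets: "{\<omega> \<in> space M. f \<omega> = v} \<in> sets M" for v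
    using measurable_sets[OF f, of "{v}"] by (simp add: vimage_def Int_def conj_commute)
  have level_sum: "g (f \<omega>) * \<phi> \<omega>
      = (\<Sum>v\<in>f ` space M. g v * (indicator {\<omega> \<in> space M. f \<omega> = v} \<omega> * \<phi> \<omega>))"
    if \<omega>: "\<omega> \<in> space M" for \<omega>
  proof -
    have "(\<Sum>v\<in>f ` space M. g v * (indicator {\<omega> \<in> space M. f \<omega> = v} \<omega> * \<phi> \<omega>))
        = (\<Sum>v\<in>f ` space M. if v = f \<omega> then g v * \<phi> \<omega> else 0)"
      using \<omega> by (intro sum.cong) (auto simp: indicator_def)
    then show ?thesis
      using fin \<omega> by (simp add: sum.delta')
  qed
  have "(\<integral>\<omega>. g (f \<omega>) * \<phi> \<omega> \<partial>M)
      = (\<integral>\<omega>. (\<Sum>v\<in>f ` space M. g v * (indicator {\<omega> \<in> space M. f \<omega> = v} \<omega> * \<phi> \<omega>)) \<partial>M)"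
    by (rule Bochner_Integration.integral_cong[OF refl level_sum])
  also have "\<dots> = (\<Sum>v\<in>f ` space M. g v * (\<integral>\<omega>. indicator {\<omega> \<in> space M. f \<omega> = v} \<omega> * \<phi> \<omega> \<partial>M))"
    using level_sets integrable_mult_indicator[OF level_sets \<phi>]
    by (subst Bochner_Integration.integral_sum) auto
  finally show ?thesis .
qed

lemma integral_indicator_mult_of_bool:
  "(\<integral>\<omega>. indicator {\<omega> \<in> space M. P \<omega>} \<omega> * of_bool (Q \<omega>) \<partial>M) = measure M {\<omega> \<in> space M. P \<omega> \<and> Q \<omega>}"
proof -
  have "(\<lambda>\<omega>. indicator {\<omega> \<in> space M. P \<omega>} \<omega> * of_bool (Q \<omega>) :: real)
      = indicator {\<omega> \<in> space M. P \<omega> \<and> Q \<omega>}"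
    by (auto simp: indicator_def)
  then show ?thesis
    by (simp add: Int_absorb2 subset_iff)
qed

lemma bernoulli_exp_moment_le_nonneg:
  fixes h p :: real
  assumes h: "0 \<le> h" and p: "0 \<le> p" "p \<le> 1"
  shows "p * exp (h * (1 - p)) + (1 - p) * exp (- h * p) \<le> exp (h\<^sup>2 / 8)"
proof -
  have "0 \<le> p * (exp h - 1)"
    using p h by (intro mult_nonneg_nonneg) simp_all
  then have pos: "0 < 1 + p * (exp h - 1)"
    by linarith
  have "ln (1 + p * (exp h - 1)) \<le> h * p + h\<^sup>2 / 8"
    using Hoeffdings_lemma_aux[OF h p(1)] by simp
  then have "1 + p * (exp h - 1) \<le> exp (h * p + h\<^sup>2 / 8)"
    using pos by (metis exp_le_cancel_iff exp_ln)
  then have "exp (- h * p) * (1 + p * (exp h - 1)) \<le> exp (- h * p) * exp (h * p + h\<^sup>2 / 8)"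
    by simp
  also have "exp (- h * p) * (1 + p * (exp h - 1)) = p * exp (h * (1 - p)) + (1 - p) * exp (- h * p)"
    by (simp add: algebra_simps flip: exp_add)
  finally show ?thesis
    by (simp flip: exp_add)
qed

lemma bernoulli_exp_moment_le:
  fixes h p :: real
  assumes "0 \<le> p" "p \<le> 1"
  shows "p * exp (h * (1 - p)) + (1 - p) * exp (- h * p) \<le> exp (h\<^sup>2 / 8)"
proof (cases "0 \<le> h")
  case False
  then show ?thesis
    using bernoulli_exp_moment_le_nonneg[of "- h" "1 - p"] assms by (simp add: algebra_simps)
qed (use bernoulli_exp_moment_le_nonneg assms in blast)

lemma abs_mult_diff_le:
  fixes a a' b b' :: real
  assumes "0 \<le> a" "a \<le> 1" "0 \<le> b'" "b' \<le> 1"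
  shows "\<bar>a * b - a' * b'\<bar> \<le> \<bar>a - a'\<bar> + \<bar>b - b'\<bar>"
proof -
  have "a * b - a' * b' = a * (b - b') + b' * (a - a')"
    by (simp add: algebra_simps)
  moreover have "\<bar>a * (b - b')\<bar> \<le> \<bar>b - b'\<bar>" "\<bar>b' * (a - a')\<bar> \<le> \<bar>a - a'\<bar>"
    using assms by (auto simp: abs_mult intro: mult_left_le_one_le)
  ultimately show ?thesis
    by linarith
qed

lemma measurable_count_space_Pair:
  fixes g :: "'w \<Rightarrow> 'b::countable"
  assumes f: "f \<in> M \<rightarrow>\<^sub>M count_space UNIV" and g: "g \<in> M \<rightarrow>\<^sub>M count_space UNIV"
  shows "(\<lambda>\<omega>. (f \<omega>, g \<omega>)) \<in> M \<rightarrow>\<^sub>M count_space UNIV"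
proof (rule measurable_compose_countable[where f = "\<lambda>b \<omega>. (f \<omega>, b)", OF _ g])
  fix b
  show "(\<lambda>\<omega>. (f \<omega>, b)) \<in> M \<rightarrow>\<^sub>M count_space UNIV"
    using measurable_compose[OF f measurable_count_space[of "\<lambda>a. (a, b)"]] .
qed

section \<open>Tail bound for Bernoulli trials selected by the past\<close>

definition selected_count :: "(nat \<Rightarrow> 'w \<Rightarrow> bool) \<Rightarrow> nat \<Rightarrow> 'w \<Rightarrow> real" where
  "selected_count a T \<omega> = (\<Sum>i\<in>{1..T}. of_bool (a i \<omega>))"

definition selected_deviation ::
    "(nat \<Rightarrow> 'w \<Rightarrow> bool) \<Rightarrow> (nat \<Rightarrow> 'w \<Rightarrow> bool) \<Rightarrow> real \<Rightarrow> nat \<Rightarrow> 'w \<Rightarrow> real" where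
  "selected_deviation a V p T \<omega> = (\<Sum>i\<in>{1..T}. of_bool (a i \<omega>) * (of_bool (V i \<omega>) - p))"

lemma selected_count_0 [simp]: "selected_count a 0 \<omega> = 0"
  by (simp add: selected_count_def)

lemma selected_count_Suc:
  "selected_count a (Suc T) \<omega> = selected_count a T \<omega> + of_bool (a (Suc T) \<omega>)"
  by (simp add: selected_count_def del: sum_of_bool_eq)

lemma selected_deviation_0 [simp]: "selected_deviation a V p 0 \<omega> = 0"
  by (simp add: selected_deviation_def)

lemma selected_deviation_Suc:
  "selected_deviation a V p (Suc T) \<omega>
     = selected_deviation a V p T \<omega> + of_bool (a (Suc T) \<omega>) * (of_bool (V (Suc T) \<omega>) - p)"
  by (simp add: selected_deviation_def del: sum_of_bool_mult_eq)

lemma selected_deviation_eq: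
  "selected_deviation a V p T \<omega>
     = real (card {i \<in> {1..T}. a i \<omega> \<and> V i \<omega>}) - p * selected_count a T \<omega>"
proof -
  have "selected_deviation a V p T \<omega>
      = (\<Sum>i\<in>{1..T}. of_bool (a i \<omega> \<and> V i \<omega>) - p * of_bool (a i \<omega>))"
    unfolding selected_deviation_def by (intro sum.cong) auto
  also have "\<dots> = real (card ({1..T} \<inter> {i. a i \<omega> \<and> V i \<omega>})) - p * selected_count a T \<omega>"
    by (simp add: sum_subtractf selected_count_def sum_distrib_left del: sum_of_bool_eq)
       (simp add: Int_def)
  finally show ?thesis
    by (simp add: Int_def)
qed

locale finite_filtration = prob_space M
  for M :: "'w measure" and H :: "nat \<Rightarrow> 'w \<Rightarrow> 'h" +
  assumes H_measurable: "H n \<in> M \<rightarrow>\<^sub>M count_space UNIV"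
    and finite_H_range: "finite (H n ` space M)"
    and H_Suc_determines_H: "H (Suc n) \<omega> = H (Suc n) \<omega>' \<Longrightarrow> H n \<omega> = H n \<omega>'"
begin

definition determined :: "nat \<Rightarrow> ('w \<Rightarrow> 'b) \<Rightarrow> bool" where
  "determined n G \<longleftrightarrow> (\<forall>\<omega> \<omega>'. H n \<omega> = H n \<omega>' \<longrightarrow> G \<omega> = G \<omega>')"

lemma determined_mono:
  assumes "determined n G" "n \<le> m"
  shows "determined m G"
  using assms(2)
proof (induction m rule: dec_induct)
  case (step k)
  then show ?case
    unfolding determined_def using H_Suc_determines_H by blast
qed (use assms(1) in simp)

lemma determined_const: "determined n (\<lambda>_. c)"
  by (simp add: determined_def)

lemma determined_comp: "determined n f \<Longrightarrow> determined n (\<lambda>\<omega>. h (f \<omega>))"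
  unfolding determined_def by metis

lemma determined_comp2:
  "determined n f \<Longrightarrow> determined n g \<Longrightarrow> determined n (\<lambda>\<omega>. h (f \<omega>) (g \<omega>))"
  unfolding determined_def by metis

lemma determined_sum:
  assumes "\<And>i. i \<in> I \<Longrightarrow> determined n (f i)"
  shows "determined n (\<lambda>\<omega>. \<Sum>i\<in>I. f i \<omega>)"
  unfolding determined_def
proof (intro allI impI)
  fix \<omega> \<omega>' assume "H n \<omega> = H n \<omega>'"
  then show "(\<Sum>i\<in>I. f i \<omega>) = (\<Sum>i\<in>I. f i \<omega>')"
    using assms unfolding determined_def by (intro sum.cong refl) blast
qed

lemma determined_factor:
  assumes "determined n G"
  obtains g where "\<And>\<omega>. G \<omega> = g (H n \<omega>)"
  using ex_factor_through[of "H n" G] assms unfolding determined_def by blast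

lemma determined_sets:
  assumes "determined n P"
  shows "{\<omega> \<in> space M. P \<omega>} \<in> sets M"
proof -
  obtain g where "\<And>\<omega>. P \<omega> = g (H n \<omega>)"
    using determined_factor[OF assms] by blast
  then have "{\<omega> \<in> space M. P \<omega>} = H n -` {v. g v} \<inter> space M"
    by auto
  then show ?thesis
    using measurable_sets[OF H_measurable, of "{v. g v}"] by simp
qed

lemma determined_integrable:
  fixes G :: "'w \<Rightarrow> real"
  assumes "determined n G"
  shows "integrable M G"
proof -
  obtain g where G: "\<And>\<omega>. G \<omega> = g (H n \<omega>)"
    using determined_factor[OF assms] by blast
  show ?thesis
  proof (rule integrable_const_bound[where B = "\<Sum>v\<in>H n ` space M. \<bar>g v\<bar>"])
    show "AE \<omega> in M. norm (G \<omega>) \<le> (\<Sum>v\<in>H n ` space M. \<bar>g v\<bar>)"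
      using finite_H_range by (auto simp: G intro!: member_le_sum)
    show "G \<in> borel_measurable M"
      unfolding G[abs_def] by (rule measurable_compose[OF H_measurable]) simp
  qed
qed

context
  fixes a V :: "nat \<Rightarrow> 'w \<Rightarrow> bool" and p :: real
  assumes p: "0 \<le> p" "p \<le> 1"
    and a_determined: "\<And>i. 1 \<le> i \<Longrightarrow> determined (Suc i) (a i)"
    and V_determined: "\<And>i. 1 \<le> i \<Longrightarrow> determined (Suc i) (V i)"
    \<comment> \<open>given the past, a selected trial succeeds with probability p\<close>
    and V_step: "\<And>n G. 1 \<le> n \<Longrightarrow> determined n G \<Longrightarrow>
      (\<integral>\<omega>. G \<omega> * of_bool (a n \<omega>) * of_bool (V n \<omega>) \<partial>M) = p * (\<integral>\<omega>. G \<omega> * of_bool (a n \<omega>) \<partial>M)"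
begin

lemma selected_count_determined: "determined (Suc T) (selected_count a T)"
  unfolding selected_count_def
proof (rule determined_sum)
  fix i assume i: "i \<in> {1..T}"
  show "determined (Suc T) (\<lambda>\<omega>. of_bool (a i \<omega>))"
    by (rule determined_comp, rule determined_mono[OF a_determined]) (use i in auto)
qed

lemma selected_deviation_determined: "determined (Suc T) (selected_deviation a V p T)"
  unfolding selected_deviation_def
proof (rule determined_sum)
  fix i assume i: "i \<in> {1..T}"
  show "determined (Suc T) (\<lambda>\<omega>. of_bool (a i \<omega>) * (of_bool (V i \<omega>) - p))"
    by (rule determined_comp2; rule determined_mono[OF a_determined]
        determined_mono[OF V_determined]) (use i in auto)
qed

lemma exp_selected_deviation_integral_Suc_le:
  "(\<integral>\<omega>. exp (l * selected_deviation a V p (Suc T) \<omega> - l\<^sup>2 / 8 * selected_count a (Suc T) \<omega>) \<partial>M)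
     \<le> (\<integral>\<omega>. exp (l * selected_deviation a V p T \<omega> - l\<^sup>2 / 8 * selected_count a T \<omega>) \<partial>M)"
proof -
  define F where "F \<omega> = exp (l * selected_deviation a V p T \<omega> - l\<^sup>2 / 8 * selected_count a T \<omega>)"
    for \<omega>
  define A where "A \<omega> = (of_bool (a (Suc T) \<omega>) :: real)" for \<omega>
  define B where "B \<omega> = (of_bool (V (Suc T) \<omega>) :: real)" for \<omega>
  define c1 where "c1 = exp (l * (1 - p) - l\<^sup>2 / 8)"
  define c0 where "c0 = exp (- l * p - l\<^sup>2 / 8)"
  have F: "determined (Suc T) F"
    unfolding F_def
    by (rule determined_comp2[OF selected_deviation_determined selected_count_determined])
  have A: "determined (Suc (Suc T)) A"
    unfolding A_def by (rule determined_comp[OF a_determined]) simp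
  have FA: "determined (Suc (Suc T)) (\<lambda>\<omega>. F \<omega> * A \<omega>)"
    by (rule determined_comp2[OF determined_mono[OF F] A]) simp
  have FAB: "determined (Suc (Suc T)) (\<lambda>\<omega>. F \<omega> * A \<omega> * B \<omega>)"
    unfolding B_def by (rule determined_comp2[OF FA determined_comp[OF V_determined]]) simp
  have F_Suc: "exp (l * selected_deviation a V p (Suc T) \<omega> - l\<^sup>2 / 8 * selected_count a (Suc T) \<omega>)
      = F \<omega> - F \<omega> * A \<omega> + c0 * (F \<omega> * A \<omega>) + (c1 - c0) * (F \<omega> * A \<omega> * B \<omega>)" for \<omega>
  proof -
    have "l * selected_deviation a V p (Suc T) \<omega> - l\<^sup>2 / 8 * selected_count a (Suc T) \<omega>
        = (l * selected_deviation a V p T \<omega> - l\<^sup>2 / 8 * selected_count a T \<omega>)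
          + A \<omega> * (l * (B \<omega> - p) - l\<^sup>2 / 8)"
      by (simp add: selected_deviation_Suc selected_count_Suc A_def B_def algebra_simps)
    then have "exp (l * selected_deviation a V p (Suc T) \<omega> - l\<^sup>2 / 8 * selected_count a (Suc T) \<omega>)
        = F \<omega> * exp (A \<omega> * (l * (B \<omega> - p) - l\<^sup>2 / 8))"
      by (simp add: F_def exp_add)
    then show ?thesis
      by (cases "a (Suc T) \<omega>"; cases "V (Suc T) \<omega>")
        (simp_all add: A_def B_def c0_def c1_def algebra_simps)
  qed
  have "p * c1 + (1 - p) * c0 = exp (- l\<^sup>2 / 8) * (p * exp (l * (1 - p)) + (1 - p) * exp (- l * p))"
    by (simp add: c0_def c1_def algebra_simps flip: exp_add)
  also have "\<dots> \<le> exp (- l\<^sup>2 / 8) * exp (l\<^sup>2 / 8)"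
    using bernoulli_exp_moment_le[OF p] by simp
  finally have mgf: "p * c1 + (1 - p) * c0 \<le> 1"
    by (simp flip: exp_add)
  have "(\<integral>\<omega>. exp (l * selected_deviation a V p (Suc T) \<omega> - l\<^sup>2 / 8 * selected_count a (Suc T) \<omega>) \<partial>M)
      = (\<integral>\<omega>. F \<omega> \<partial>M) - (\<integral>\<omega>. F \<omega> * A \<omega> \<partial>M) + c0 * (\<integral>\<omega>. F \<omega> * A \<omega> \<partial>M)
        + (c1 - c0) * (\<integral>\<omega>. F \<omega> * A \<omega> * B \<omega> \<partial>M)"
    unfolding F_Suc
    using determined_integrable[OF F] determined_integrable[OF FA] determined_integrable[OF FAB]
    by simp
  also have "(\<integral>\<omega>. F \<omega> * A \<omega> * B \<omega> \<partial>M) = p * (\<integral>\<omega>. F \<omega> * A \<omega> \<partial>M)"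
    unfolding A_def B_def by (rule V_step[OF _ F]) simp
  also have "(\<integral>\<omega>. F \<omega> \<partial>M) - (\<integral>\<omega>. F \<omega> * A \<omega> \<partial>M) + c0 * (\<integral>\<omega>. F \<omega> * A \<omega> \<partial>M)
        + (c1 - c0) * (p * (\<integral>\<omega>. F \<omega> * A \<omega> \<partial>M))
      = (\<integral>\<omega>. F \<omega> \<partial>M) - (1 - (p * c1 + (1 - p) * c0)) * (\<integral>\<omega>. F \<omega> * A \<omega> \<partial>M)"
    by (simp add: algebra_simps)
  also have "\<dots> \<le> (\<integral>\<omega>. F \<omega> \<partial>M)"
    using mgf by (simp add: F_def A_def)
  finally show ?thesis
    unfolding F_def .
qed

lemma exp_selected_deviation_integral_le:
  "(\<integral>\<omega>. exp (l * selected_deviation a V p T \<omega> - l\<^sup>2 / 8 * selected_count a T \<omega>) \<partial>M) \<le> 1"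
proof (induction T)
  case (Suc T)
  then show ?case
    using exp_selected_deviation_integral_Suc_le[of l T] by linarith
qed simp

lemma selected_deviation_one_sided_measure_le:
  assumes l: "l\<^sup>2 = 16 * \<epsilon>\<^sup>2"
  shows "measure M {\<omega> \<in> space M. selected_count a T \<omega> = real m
            \<and> 4 * \<epsilon>\<^sup>2 * m \<le> l * selected_deviation a V p T \<omega>}
         \<le> exp (- 2 * \<epsilon>\<^sup>2 * m)"
proof -
  define u where "u \<omega> = exp (l * selected_deviation a V p T \<omega> - l\<^sup>2 / 8 * selected_count a T \<omega>)"
    for \<omega>
  have u: "determined (Suc T) u"
    unfolding u_def
    by (rule determined_comp2[OF selected_deviation_determined selected_count_determined])
  have "{\<omega> \<in> space M. selected_count a T \<omega> = real m \<and> 4 * \<epsilon>\<^sup>2 * m \<le> l * selected_deviation a V p T \<omega>}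
      \<subseteq> {\<omega> \<in> space M. exp (2 * \<epsilon>\<^sup>2 * m) \<le> u \<omega>}"
    using l by (auto simp: u_def field_simps)
  then have "measure M {\<omega> \<in> space M. selected_count a T \<omega> = real m
              \<and> 4 * \<epsilon>\<^sup>2 * m \<le> l * selected_deviation a V p T \<omega>}
      \<le> measure M {\<omega> \<in> space M. exp (2 * \<epsilon>\<^sup>2 * m) \<le> u \<omega>}"
    by (intro finite_measure_mono determined_sets[of "Suc T"] determined_comp[OF u])
  also have "\<dots> \<le> (\<integral>\<omega>. u \<omega> \<partial>M) / exp (2 * \<epsilon>\<^sup>2 * m)"
    by (rule integral_Markov_inequality_measure[OF determined_integrable[OF u] sets.top])
      (simp_all add: u_def)
  also have "\<dots> \<le> 1 / exp (2 * \<epsilon>\<^sup>2 * m)"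
    unfolding u_def by (intro divide_right_mono exp_selected_deviation_integral_le) simp
  also have "\<dots> = exp (- 2 * \<epsilon>\<^sup>2 * m)"
    by (simp add: exp_minus field_simps)
  finally show ?thesis .
qed

lemma selected_deviation_measure_le:
  assumes \<epsilon>: "0 \<le> \<epsilon>"
  shows "measure M {\<omega> \<in> space M. selected_count a T \<omega> = real m
            \<and> \<epsilon> * m < \<bar>selected_deviation a V p T \<omega>\<bar>}
         \<le> 2 * exp (- 2 * \<epsilon>\<^sup>2 * m)"
proof -
  define S where "S l = {\<omega> \<in> space M. selected_count a T \<omega> = real m
      \<and> 4 * \<epsilon>\<^sup>2 * m \<le> l * selected_deviation a V p T \<omega>}" for l
  have S_sets: "S l \<in> sets M" for l
    unfolding S_def
    by (rule determined_sets[of "Suc T"],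
        rule determined_comp2[OF selected_count_determined selected_deviation_determined])
  have "{\<omega> \<in> space M. selected_count a T \<omega> = real m \<and> \<epsilon> * m < \<bar>selected_deviation a V p T \<omega>\<bar>}
      \<subseteq> S (4 * \<epsilon>) \<union> S (- 4 * \<epsilon>)"
  proof
    fix \<omega>
    assume \<omega>: "\<omega> \<in> {\<omega> \<in> space M. selected_count a T \<omega> = real m
      \<and> \<epsilon> * m < \<bar>selected_deviation a V p T \<omega>\<bar>}"
    define d where "d = selected_deviation a V p T \<omega>"
    have "4 * \<epsilon>\<^sup>2 * m \<le> 4 * \<epsilon> * \<bar>d\<bar>"
      using mult_left_mono[of "\<epsilon> * m" "\<bar>d\<bar>" "4 * \<epsilon>"] \<omega> \<epsilon>
      by (simp add: d_def power2_eq_square)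
    then consider "4 * \<epsilon>\<^sup>2 * m \<le> (4 * \<epsilon>) * d" | "4 * \<epsilon>\<^sup>2 * m \<le> (- 4 * \<epsilon>) * d"
      by (cases "0 \<le> d") auto
    then show "\<omega> \<in> S (4 * \<epsilon>) \<union> S (- 4 * \<epsilon>)"
      by cases (use \<omega> in \<open>unfold S_def d_def, blast+\<close>)
  qed
  then have "measure M {\<omega> \<in> space M. selected_count a T \<omega> = real m
              \<and> \<epsilon> * m < \<bar>selected_deviation a V p T \<omega>\<bar>}
      \<le> measure M (S (4 * \<epsilon>)) + measure M (S (- 4 * \<epsilon>))"
    by (meson S_sets finite_measure_mono measure_Un_le order_trans sets.Un)
  also have "\<dots> \<le> exp (- 2 * \<epsilon>\<^sup>2 * m) + exp (- 2 * \<epsilon>\<^sup>2 * m)"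
    unfolding S_def
    by (intro add_mono selected_deviation_one_sided_measure_le) (simp_all add: power2_eq_square)
  finally show ?thesis
    by simp
qed

lemma selected_deviation_ever_measure_le:
  assumes \<epsilon>: "0 \<le> \<epsilon>" and count_le: "\<And>T \<omega>. selected_count a T \<omega> \<le> m"
  shows "measure M {\<omega> \<in> space M. \<exists>T. selected_count a T \<omega> = real m
            \<and> \<epsilon> * m < \<bar>selected_deviation a V p T \<omega>\<bar>}
         \<le> 2 * exp (- 2 * \<epsilon>\<^sup>2 * m)"
proof -
  define D where "D T = {\<omega> \<in> space M. selected_count a T \<omega> = real m
      \<and> \<epsilon> * m < \<bar>selected_deviation a V p T \<omega>\<bar>}" for T
  have D_sets: "D T \<in> sets M" for T
    unfolding D_def
    by (rule determined_sets[of "Suc T"],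
        rule determined_comp2[OF selected_count_determined selected_deviation_determined])
  have "D T \<subseteq> D (Suc T)" for T
  proof
    fix \<omega> assume \<omega>: "\<omega> \<in> D T"
    then have "\<not> a (Suc T) \<omega>"
      using count_le[of "Suc T" \<omega>] by (auto simp: D_def selected_count_Suc)
    then show "\<omega> \<in> D (Suc T)"
      using \<omega> by (simp add: D_def selected_count_Suc selected_deviation_Suc)
  qed
  then have "(\<lambda>T. measure M (D T)) \<longlonglongrightarrow> measure M (\<Union>T. D T)"
    using D_sets by (intro finite_Lim_measure_incseq) (auto intro: incseq_SucI)
  moreover have "measure M (D T) \<le> 2 * exp (- 2 * \<epsilon>\<^sup>2 * m)" for T
    unfolding D_def by (rule selected_deviation_measure_le[OF \<epsilon>])
  ultimately have "measure M (\<Union>T. D T) \<le> 2 * exp (- 2 * \<epsilon>\<^sup>2 * m)"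
    by (intro LIMSEQ_le_const2) auto
  moreover have "(\<Union>T. D T) = {\<omega> \<in> space M. \<exists>T. selected_count a T \<omega> = real m
      \<and> \<epsilon> * m < \<bar>selected_deviation a V p T \<omega>\<bar>}"
    by (auto simp: D_def)
  ultimately show ?thesis
    by simp
qed

end

end

section \<open>Counts and estimators\<close>

lemma hist_eq_iff:
  "hist X Y Z n \<omega> = hist X Y Z n \<omega>'
     \<longleftrightarrow> (\<forall>i\<in>{1..<n}. X i \<omega> = X i \<omega>' \<and> Y i \<omega> = Y i \<omega>' \<and> Z i \<omega> = Z i \<omega>')"
  by (simp add: hist_def map_eq_conv)

lemma length_hist: "length (hist X Y Z n \<omega>) = n - 1"
  by (simp add: hist_def)

lemma hist_Suc:
  "hist X Y Z (Suc n) \<omega> = (if n = 0 then [] else hist X Y Z n \<omega> @ [(X n \<omega>, Y n \<omega>, Z n \<omega>)])"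
  by (simp add: hist_def)

lemma cnt_xz_0 [simp]: "cnt_xz X Z 0 x z \<omega> = 0"
  by (simp add: cnt_xz_def)

lemma cnt_xz_Suc:
  "cnt_xz X Z (Suc T) x z \<omega> = cnt_xz X Z T x z \<omega> + of_bool (X (Suc T) \<omega> = x \<and> Z (Suc T) \<omega> = z)"
proof -
  have "{n \<in> {1..Suc T}. X n \<omega> = x \<and> Z n \<omega> = z}
      = {n \<in> {1..T}. X n \<omega> = x \<and> Z n \<omega> = z}
        \<union> (if X (Suc T) \<omega> = x \<and> Z (Suc T) \<omega> = z then {Suc T} else {})"
    by (auto simp: le_Suc_eq)
  then show ?thesis
    unfolding cnt_xz_def by (simp add: card_insert_if)
qed

definition among_first_occurrences ::
    "(nat \<Rightarrow> 'w \<Rightarrow> 'x) \<Rightarrow> (nat \<Rightarrow> 'w \<Rightarrow> 'z) \<Rightarrow> 'x \<Rightarrow> 'z \<Rightarrow> nat \<Rightarrow> nat \<Rightarrow> 'w \<Rightarrow> bool" where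
  "among_first_occurrences X Z x z m i \<omega> \<longleftrightarrow>
     X i \<omega> = x \<and> Z i \<omega> = z \<and> cnt_xz X Z (i - 1) x z \<omega> < m"

lemma among_first_occurrences_iff:
  assumes "1 \<le> i"
  shows "among_first_occurrences X Z x z m i \<omega> \<longleftrightarrow>
    cnt_xz X Z i x z \<omega> \<le> m \<and> X i \<omega> = x \<and> Z i \<omega> = z"
proof -
  obtain k where "i = Suc k"
    using assms by (cases i) auto
  then show ?thesis
    by (auto simp: among_first_occurrences_def cnt_xz_Suc)
qed

lemma selected_count_among_first_occurrences:
  "selected_count (among_first_occurrences X Z x z m) T \<omega> = min (cnt_xz X Z T x z \<omega>) m"
  by (induction T) (auto simp: selected_count_Suc among_first_occurrences_def cnt_xz_Suc min_def)

lemma selected_among_first_occurrences_iff: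
  "(selected_count (among_first_occurrences X Z x z k) N \<omega> = real k
      \<and> \<epsilon> * k < \<bar>selected_deviation (among_first_occurrences X Z x z k) (\<lambda>i \<omega>. Y i \<omega> = y) p N \<omega>\<bar>)
   \<longleftrightarrow> (k \<le> cnt_xz X Z N x z \<omega> \<and>
      \<epsilon> * k < \<bar>real (card {n \<in> {1..N}. cnt_xz X Z n x z \<omega> \<le> k \<and> X n \<omega> = x \<and> Y n \<omega> = y \<and> Z n \<omega> = z})
               - k * p\<bar>)"
proof -
  have count: "selected_count (among_first_occurrences X Z x z k) N \<omega> = real k
      \<longleftrightarrow> k \<le> cnt_xz X Z N x z \<omega>"
    by (auto simp: selected_count_among_first_occurrences min_def)
  have "{n \<in> {1..N}. cnt_xz X Z n x z \<omega> \<le> k \<and> X n \<omega> = x \<and> Y n \<omega> = y \<and> Z n \<omega> = z}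
      = {n \<in> {1..N}. among_first_occurrences X Z x z k n \<omega> \<and> Y n \<omega> = y}"
    by (auto simp: among_first_occurrences_iff)
  then show ?thesis
    using count by (auto simp: selected_deviation_eq mult.commute)
qed

lemma flr2_less_2: "n < 2 \<Longrightarrow> flr2 n = 1"
  by (simp add: flr2_def)

lemma flr2_power: "2 \<le> n \<Longrightarrow> \<exists>j\<ge>1. flr2 n = 2 ^ j \<and> 2 ^ j \<le> n"
proof -
  assume n: "2 \<le> n"
  let ?P = "\<lambda>k. 1 \<le> k \<and> 2 ^ k \<le> n"
  have bound: "k \<le> n" if "?P k" for k
    using that less_exp[of k] by linarith
  have "?P (GREATEST k. ?P k)"
    by (rule GreatestI_nat[where P = ?P and k = 1 and b = n]) (simp_all add: n bound)
  then show ?thesis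
    using n by (auto simp: flr2_def)
qed

lemma flr2_eq_1_iff: "flr2 n = 1 \<longleftrightarrow> n < 2"
proof
  assume flr2: "flr2 n = 1"
  show "n < 2"
  proof (rule ccontr)
    assume "\<not> n < 2"
    then obtain j where "1 \<le> j" "flr2 n = 2 ^ j"
      using flr2_power[of n] by auto
    then have "2 ^ 1 \<le> flr2 n"
      using power_increasing[of 1 j "2::nat"] by simp
    then show False
      using flr2 by simp
  qed
qed (rule flr2_less_2)

lemma flr2_pos: "0 < flr2 n"
  using flr2_power[of n] by (cases "n < 2") (auto simp: flr2_less_2)

lemma flr2_le: "1 \<le> n \<Longrightarrow> flr2 n \<le> n"
  using flr2_power[of n] by (cases "n < 2") (auto simp: flr2_less_2)

lemma cnt_z_le: "cnt_z Z k z \<omega> \<le> k"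
proof -
  have "cnt_z Z k z \<omega> \<le> card {1..k}"
    unfolding cnt_z_def by (rule card_mono) auto
  then show ?thesis
    by simp
qed

lemma p_z_est_bounds: "0 \<le> p_z_est Z N z \<omega>" "p_z_est Z N z \<omega> \<le> 1"
  using cnt_z_le[of Z "flr2 N" z \<omega>] flr2_pos[of N] by (simp_all add: p_z_est_def)

definition radius :: "real \<Rightarrow> nat \<Rightarrow> real \<Rightarrow> real" where
  "radius c k \<delta> = sqrt ((2 * ln (log 2 (real k)) + ln (6.6 * c / \<delta>)) / (2 * real k))"

lemma rad_flr2: "2 \<le> n \<Longrightarrow> rad c (flr2 n) \<delta> = ereal (radius c (flr2 n) \<delta>)"
  using flr2_eq_1_iff[of n] by (simp add: rad_def radius_def)

lemma radius_power_sq: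
  assumes "1 \<le> j" "0 < \<delta>" "\<delta> \<le> 6.6 * c"
  shows "(radius c (2 ^ j) \<delta>)\<^sup>2 = (2 * ln j + ln (6.6 * c / \<delta>)) / (2 * 2 ^ j)"
    and "0 \<le> radius c (2 ^ j) \<delta>"
proof -
  have "0 \<le> ln (6.6 * c / \<delta>)"
    using assms by simp
  then have "0 \<le> (2 * ln j + ln (6.6 * c / \<delta>)) / (2 * 2 ^ j)"
    using assms by simp
  then show "(radius c (2 ^ j) \<delta>)\<^sup>2 = (2 * ln j + ln (6.6 * c / \<delta>)) / (2 * 2 ^ j)"
    and "0 \<le> radius c (2 ^ j) \<delta>"
    by (simp_all add: radius_def log_nat_power)
qed

lemma exp_radius_power:
  assumes "1 \<le> j" "0 < \<delta>" "\<delta> \<le> 6.6 * c"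
  shows "exp (- 2 * (radius c (2 ^ j) \<delta>)\<^sup>2 * 2 ^ j) = \<delta> / (6.6 * c * j\<^sup>2)"
proof -
  have "- 2 * (radius c (2 ^ j) \<delta>)\<^sup>2 * 2 ^ j = - (2 * ln j) - ln (6.6 * c / \<delta>)"
    using radius_power_sq(1)[OF assms] by (simp add: field_simps)
  also have "\<dots> = ln (\<delta> / (6.6 * c * j\<^sup>2))"
    using assms by (simp add: ln_div ln_mult ln_realpow)
  finally show ?thesis
    using assms by simp
qed

lemma h_est_eq_infinity:
  fixes Z :: "nat \<Rightarrow> 'w \<Rightarrow> 'z::finite"
  assumes "N < 2 \<or> (\<exists>z. cnt_xz X Z N x z \<omega> < 2)"
  shows "h_est X Z \<delta> N x \<omega> = \<infinity>"
proof -
  have not_minf: "rad c k \<delta> \<noteq> - \<infinity>" for c k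
    by (simp add: rad_def)
  have "(\<Sum>z\<in>A. rad c (flr2 (cnt_xz X Z N x z \<omega>)) \<delta>) \<noteq> - \<infinity>" for c and A :: "'z set"
    by (induction A rule: infinite_finite_induct) (simp_all add: not_minf)
  moreover have "ereal (real CARD('z)) * rad c k \<delta> \<noteq> - \<infinity>" for c k
    using not_minf[of c k] by (cases "rad c k \<delta>") auto
  moreover have "N < 2 \<Longrightarrow> ereal (real CARD('z)) * rad c (flr2 N) \<delta> = \<infinity>" for c
    by (simp add: flr2_less_2 rad_def)
  moreover have "(\<Sum>z\<in>UNIV. rad c (flr2 (cnt_xz X Z N x z \<omega>)) \<delta>) = \<infinity>"
    if "cnt_xz X Z N x z \<omega> < 2" for c z
    using flr2_less_2[OF that] by (subst sum_Pinfty) (auto simp: rad_def)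
  ultimately show ?thesis
    using assms unfolding h_est_def by auto
qed

lemma h_est_eq_radius:
  fixes Z :: "nat \<Rightarrow> 'w \<Rightarrow> 'z::finite"
  assumes "2 \<le> N" "\<And>z. 2 \<le> cnt_xz X Z N x z \<omega>"
  shows "h_est X Z \<delta> N x \<omega> = ereal (real CARD('z) * radius CARD('z) (flr2 N) \<delta>
           + (\<Sum>z\<in>UNIV. radius CARD('z) (flr2 (cnt_xz X Z N x z \<omega>)) \<delta>))"
  using assms by (simp add: h_est_def rad_flr2)

lemma estimate_within_h_est:
  fixes Z :: "nat \<Rightarrow> 'w \<Rightarrow> 'z::finite"
  assumes Z_close: "\<And>z. 2 \<le> N \<Longrightarrow> \<bar>p_z_est Z N z \<omega> - pmf \<pi> z\<bar> \<le> radius CARD('z) (flr2 N) \<delta>"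
    and Y_close: "\<And>z. 2 \<le> cnt_xz X Z N x z \<omega> \<Longrightarrow>
      \<bar>p_y_est X Y Z N y x z \<omega> - pmf (q x z) y\<bar> \<le> radius CARD('z) (flr2 (cnt_xz X Z N x z \<omega>)) \<delta>"
  shows "ereal (\<Sum>z\<in>UNIV. pmf (q x z) y * pmf \<pi> z)
           \<in> {ereal (m_est X Y Z N x y \<omega>) - h_est X Z \<delta> N x \<omega>
               .. ereal (m_est X Y Z N x y \<omega>) + h_est X Z \<delta> N x \<omega>}"
proof (cases "N < 2 \<or> (\<exists>z. cnt_xz X Z N x z \<omega> < 2)")
  case True
  then show ?thesis
    by (simp add: h_est_eq_infinity)
next
  case False
  then have N: "2 \<le> N" and cnt: "\<And>z. 2 \<le> cnt_xz X Z N x z \<omega>"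
    by (auto simp: not_less)
  have "\<bar>m_est X Y Z N x y \<omega> - (\<Sum>z\<in>UNIV. pmf (q x z) y * pmf \<pi> z)\<bar>
      \<le> (\<Sum>z\<in>UNIV. \<bar>p_z_est Z N z \<omega> * p_y_est X Y Z N y x z \<omega> - pmf \<pi> z * pmf (q x z) y\<bar>)"
    unfolding m_est_def by (simp add: sum_subtractf[symmetric] mult.commute sum_abs del: sum_subtractf)
  also have "\<dots> \<le> (\<Sum>z\<in>UNIV. radius CARD('z) (flr2 N) \<delta>
                   + radius CARD('z) (flr2 (cnt_xz X Z N x z \<omega>)) \<delta>)"
    using Z_close[OF N] Y_close[OF cnt] p_z_est_bounds
    by (intro sum_mono order.trans[OF abs_mult_diff_le add_mono]) (simp_all add: pmf_le_1)
  finally show ?thesis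
    using N cnt by (simp add: h_est_eq_radius sum.distrib abs_le_iff algebra_simps)
qed

section \<open>The sequential back-door model\<close>

locale backdoor_process =
  fixes M :: "'w measure"
    and X :: "nat \<Rightarrow> 'w \<Rightarrow> 'x::finite"
    and Y :: "nat \<Rightarrow> 'w \<Rightarrow> 'y::finite"
    and Z :: "nat \<Rightarrow> 'w \<Rightarrow> 'z::finite"
    and \<pi> :: "'z pmf"
    and q :: "'x \<Rightarrow> 'z \<Rightarrow> 'y pmf"
  assumes prob_space: "prob_space M"
    and X_meas: "\<And>n. X n \<in> measurable M (count_space UNIV)"
    and Y_meas: "\<And>n. Y n \<in> measurable M (count_space UNIV)"
    and Z_meas: "\<And>n. Z n \<in> measurable M (count_space UNIV)"
    and Z_cond: "\<And>n B z. n \<ge> 1 \<Longrightarrow>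
        measure M {\<omega> \<in> space M. hist X Y Z n \<omega> \<in> B \<and> Z n \<omega> = z}
        = pmf \<pi> z * measure M {\<omega> \<in> space M. hist X Y Z n \<omega> \<in> B}"
    and Y_cond: "\<And>n B y'. n \<ge> 1 \<Longrightarrow>
        measure M {\<omega> \<in> space M. (hist X Y Z n \<omega>, Z n \<omega>, X n \<omega>) \<in> B \<and> Y n \<omega> = y'}
        = (\<integral>\<omega>. indicator {\<omega> \<in> space M. (hist X Y Z n \<omega>, Z n \<omega>, X n \<omega>) \<in> B} \<omega>
                 * pmf (q (X n \<omega>) (Z n \<omega>)) y' \<partial>M)"
begin

lemma hist_measurable: "hist X Y Z n \<in> M \<rightarrow>\<^sub>M count_space UNIV"
proof (induction n)
  case (Suc n)
  have "(\<lambda>\<omega>. (hist X Y Z n \<omega>, X n \<omega>, Y n \<omega>, Z n \<omega>)) \<in> M \<rightarrow>\<^sub>M count_space UNIV"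
    by (intro measurable_count_space_Pair Suc.IH X_meas Y_meas Z_meas)
  from measurable_compose[OF this measurable_count_space,
      of "\<lambda>(l, x, y, z). if n = 0 then [] else l @ [(x, y, z)]"]
  show ?case
    by (simp add: hist_Suc[abs_def])
qed (simp add: hist_def)

sublocale finite_filtration M "hist X Y Z"
proof (rule finite_filtration.intro[OF prob_space finite_filtration_axioms.intro])
  show "finite (hist X Y Z n ` space M)" for n
    by (rule finite_subset[OF _ finite_lists_length_eq[of UNIV "n - 1"]]) (auto simp: length_hist)
  show "hist X Y Z n \<omega> = hist X Y Z n \<omega>'" if "hist X Y Z (Suc n) \<omega> = hist X Y Z (Suc n) \<omega>'" for n \<omega> \<omega>'
    using that by (simp add: hist_eq_iff)
qed (rule hist_measurable)

lemma determined_iff: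
  "determined n G \<longleftrightarrow> (\<forall>\<omega> \<omega>'. (\<forall>i\<in>{1..<n}. X i \<omega> = X i \<omega>' \<and> Y i \<omega> = Y i \<omega>' \<and> Z i \<omega> = Z i \<omega>')
                           \<longrightarrow> G \<omega> = G \<omega>')"
  by (simp add: determined_def hist_eq_iff)

lemma observation_determined:
  assumes "1 \<le> n"
  shows "determined (Suc n) (X n)" and "determined (Suc n) (Y n)" and "determined (Suc n) (Z n)"
  using assms by (auto simp: determined_iff)

lemma cnt_z_determined: "k < n \<Longrightarrow> determined n (cnt_z Z k z)"
  unfolding determined_iff cnt_z_def
  by (intro allI impI arg_cong[where f = card] Collect_cong) auto

lemma cnt_xz_determined: "k < n \<Longrightarrow> determined n (cnt_xz X Z k x z)"
  unfolding determined_iff cnt_xz_def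
  by (intro allI impI arg_cong[where f = card] Collect_cong) auto

lemma integral_mult_Z_eq:
  assumes n: "1 \<le> n" and G: "determined n G"
  shows "(\<integral>\<omega>. G \<omega> * of_bool (Z n \<omega> = z) \<partial>M) = pmf \<pi> z * (\<integral>\<omega>. G \<omega> \<partial>M)"
proof -
  obtain g where G_eq: "\<And>\<omega>. G \<omega> = g (hist X Y Z n \<omega>)"
    using determined_factor[OF G] by blast
  define L where "L v = {\<omega> \<in> space M. hist X Y Z n \<omega> = v}" for v
  have "(\<integral>\<omega>. indicator (L v) \<omega> * of_bool (Z n \<omega> = z) \<partial>M)
      = measure M {\<omega> \<in> space M. hist X Y Z n \<omega> \<in> {v} \<and> Z n \<omega> = z}" for v
    unfolding L_def integral_indicator_mult_of_bool by simp
  also have "\<dots> v = pmf \<pi> z * (\<integral>\<omega>. indicator (L v) \<omega> * of_bool True \<partial>M)" for v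
    unfolding L_def integral_indicator_mult_of_bool using Z_cond[OF n, of "{v}" z] by simp
  finally have level_Z: "(\<integral>\<omega>. indicator (L v) \<omega> * of_bool (Z n \<omega> = z) \<partial>M)
      = pmf \<pi> z * (\<integral>\<omega>. indicator (L v) \<omega> * of_bool True \<partial>M)" for v .
  have Z_integrable: "integrable M (\<lambda>\<omega>. of_bool (Z n \<omega> = z) :: real)"
    by (rule determined_integrable, rule determined_comp[OF observation_determined(3)[OF n]])
  have "(\<integral>\<omega>. G \<omega> * of_bool (Z n \<omega> = z) \<partial>M)
      = (\<Sum>v\<in>hist X Y Z n ` space M. g v * (\<integral>\<omega>. indicator (L v) \<omega> * of_bool (Z n \<omega> = z) \<partial>M))"
    unfolding G_eq L_def by (rule integral_finite_valued_mult[OF H_measurable finite_H_range Z_integrable])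
  also have "\<dots> = pmf \<pi> z * (\<Sum>v\<in>hist X Y Z n ` space M. g v * (\<integral>\<omega>. indicator (L v) \<omega> * of_bool True \<partial>M))"
    by (simp add: level_Z sum_distrib_left mult_ac)
  also have "(\<Sum>v\<in>hist X Y Z n ` space M. g v * (\<integral>\<omega>. indicator (L v) \<omega> * of_bool True \<partial>M))
      = (\<integral>\<omega>. G \<omega> * of_bool True \<partial>M)"
    unfolding G_eq L_def
    by (rule integral_finite_valued_mult[OF H_measurable finite_H_range, symmetric]) simp
  finally show ?thesis
    by simp
qed

lemma integral_mult_Y_eq:
  assumes n: "1 \<le> n"
    and G: "\<And>\<omega> \<omega>'. hist X Y Z n \<omega> = hist X Y Z n \<omega>' \<Longrightarrow> Z n \<omega> = Z n \<omega>' \<Longrightarrow> X n \<omega> = X n \<omega>'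
              \<Longrightarrow> G \<omega> = G \<omega>'"
  shows "(\<integral>\<omega>. G \<omega> * of_bool (Y n \<omega> = y) \<partial>M) = (\<integral>\<omega>. G \<omega> * pmf (q (X n \<omega>) (Z n \<omega>)) y \<partial>M)"
proof -
  define W where "W \<omega> = (hist X Y Z n \<omega>, Z n \<omega>, X n \<omega>)" for \<omega>
  define \<rho> where "\<rho> \<omega> = pmf (q (X n \<omega>) (Z n \<omega>)) y" for \<omega>
  define L where "L v = {\<omega> \<in> space M. W \<omega> = v}" for v
  have "G \<omega> = G \<omega>'" if "W \<omega> = W \<omega>'" for \<omega> \<omega>'
    by (rule G) (use that in \<open>simp_all add: W_def\<close>)
  then obtain g where G_eq: "\<And>\<omega>. G \<omega> = g (W \<omega>)"
    using ex_factor_through[of W G] by blast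
  have W_measurable: "W \<in> M \<rightarrow>\<^sub>M count_space UNIV"
    unfolding W_def[abs_def]
    by (intro measurable_count_space_Pair hist_measurable X_meas Z_meas)
  have W_finite: "finite (W ` space M)"
    by (rule finite_subset[of _ "hist X Y Z n ` space M \<times> UNIV \<times> UNIV"])
      (auto simp: W_def finite_H_range)
  have Y_integrable: "integrable M (\<lambda>\<omega>. of_bool (Y n \<omega> = y) :: real)"
    by (rule determined_integrable, rule determined_comp[OF observation_determined(2)[OF n]])
  have \<rho>_integrable: "integrable M \<rho>"
    unfolding \<rho>_def
    by (rule determined_integrable,
        rule determined_comp2[OF observation_determined(1,3)[OF n]])
  have level_Y: "(\<integral>\<omega>. indicator (L v) \<omega> * of_bool (Y n \<omega> = y) \<partial>M)
      = (\<integral>\<omega>. indicator (L v) \<omega> * \<rho> \<omega> \<partial>M)" for v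
    using Y_cond[OF n, of "{v}" y]
    unfolding L_def integral_indicator_mult_of_bool by (simp add: W_def \<rho>_def)
  have "(\<integral>\<omega>. G \<omega> * of_bool (Y n \<omega> = y) \<partial>M)
      = (\<Sum>v\<in>W ` space M. g v * (\<integral>\<omega>. indicator (L v) \<omega> * of_bool (Y n \<omega> = y) \<partial>M))"
    unfolding G_eq L_def by (rule integral_finite_valued_mult[OF W_measurable W_finite Y_integrable])
  also have "\<dots> = (\<Sum>v\<in>W ` space M. g v * (\<integral>\<omega>. indicator (L v) \<omega> * \<rho> \<omega> \<partial>M))"
    by (simp only: level_Y)
  also have "\<dots> = (\<integral>\<omega>. G \<omega> * \<rho> \<omega> \<partial>M)"
    unfolding G_eq L_def
    by (rule integral_finite_valued_mult[OF W_measurable W_finite \<rho>_integrable, symmetric])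
  finally show ?thesis
    by (simp add: \<rho>_def)
qed

definition Z_deviates :: "'z \<Rightarrow> nat \<Rightarrow> real \<Rightarrow> 'w set" where
  "Z_deviates z k \<epsilon> = {\<omega> \<in> space M. \<epsilon> * k < \<bar>real (cnt_z Z k z \<omega>) - k * pmf \<pi> z\<bar>}"

text \<open>The k-th round with (X, Z) = (x, z) is random, hence the quantifier over N.\<close>

definition Y_deviates :: "'x \<Rightarrow> 'y \<Rightarrow> 'z \<Rightarrow> nat \<Rightarrow> real \<Rightarrow> 'w set" where
  "Y_deviates x y z k \<epsilon> = {\<omega> \<in> space M. \<exists>N. k \<le> cnt_xz X Z N x z \<omega> \<and>
     \<epsilon> * k < \<bar>real (card {n \<in> {1..N}. cnt_xz X Z n x z \<omega> \<le> k \<and> X n \<omega> = x \<and> Y n \<omega> = y \<and> Z n \<omega> = z})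
               - k * pmf (q x z) y\<bar>}"

lemma measure_Z_deviates_le:
  assumes "0 \<le> \<epsilon>"
  shows "measure M (Z_deviates z k \<epsilon>) \<le> 2 * exp (- 2 * \<epsilon>\<^sup>2 * k)"
proof -
  have "Z_deviates z k \<epsilon> = {\<omega> \<in> space M. selected_count (\<lambda>i _. i \<le> k) k \<omega> = real k
      \<and> \<epsilon> * k < \<bar>selected_deviation (\<lambda>i _. i \<le> k) (\<lambda>i \<omega>. Z i \<omega> = z) (pmf \<pi> z) k \<omega>\<bar>}"
    by (simp add: Z_deviates_def selected_deviation_eq selected_count_def cnt_z_def mult.commute)
  also have "measure M \<dots> \<le> 2 * exp (- 2 * \<epsilon>\<^sup>2 * k)"
  proof (rule selected_deviation_measure_le)
    show "determined (Suc i) (\<lambda>_. i \<le> k)" for i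
      by (rule determined_const)
    show "determined (Suc i) (\<lambda>\<omega>. Z i \<omega> = z)" if "1 \<le> i" for i
      by (rule determined_comp[OF observation_determined(3)[OF that]])
    show "(\<integral>\<omega>. G \<omega> * of_bool (n \<le> k) * of_bool (Z n \<omega> = z) \<partial>M)
        = pmf \<pi> z * (\<integral>\<omega>. G \<omega> * of_bool (n \<le> k) \<partial>M)" if "1 \<le> n" "determined n G" for n G
      by (rule integral_mult_Z_eq[OF that(1) determined_comp[OF that(2)]])
  qed (use assms in \<open>simp_all add: pmf_le_1\<close>)
  finally show ?thesis .
qed

lemma among_first_occurrences_determined:
  assumes "1 \<le> i"
  shows "determined (Suc i) (among_first_occurrences X Z x z m i)"
  unfolding among_first_occurrences_def
  by (rule determined_comp2[OF observation_determined(1)[OF assms]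
        determined_comp2[OF observation_determined(3)[OF assms] cnt_xz_determined]]) simp

lemma integral_among_first_occurrences_mult_Y_eq:
  assumes n: "1 \<le> n" and G: "determined n G"
  shows "(\<integral>\<omega>. G \<omega> * of_bool (among_first_occurrences X Z x z k n \<omega>) * of_bool (Y n \<omega> = y) \<partial>M)
       = pmf (q x z) y * (\<integral>\<omega>. G \<omega> * of_bool (among_first_occurrences X Z x z k n \<omega>) \<partial>M)"
proof -
  let ?a = "among_first_occurrences X Z x z k n"
  have cnt: "determined n (cnt_xz X Z (n - 1) x z)"
    using n by (intro cnt_xz_determined) simp
  have "(\<integral>\<omega>. G \<omega> * of_bool (?a \<omega>) * of_bool (Y n \<omega> = y) \<partial>M)
      = (\<integral>\<omega>. G \<omega> * of_bool (?a \<omega>) * pmf (q (X n \<omega>) (Z n \<omega>)) y \<partial>M)"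
  proof (rule integral_mult_Y_eq[OF n])
    fix \<omega> \<omega>'
    assume hist: "hist X Y Z n \<omega> = hist X Y Z n \<omega>'" and "Z n \<omega> = Z n \<omega>'" "X n \<omega> = X n \<omega>'"
    moreover have "G \<omega> = G \<omega>'" "cnt_xz X Z (n - 1) x z \<omega> = cnt_xz X Z (n - 1) x z \<omega>'"
      using G cnt hist unfolding determined_def by blast+
    ultimately show "G \<omega> * of_bool (?a \<omega>) = G \<omega>' * of_bool (?a \<omega>')"
      by (simp add: among_first_occurrences_def)
  qed
  also have "\<dots> = (\<integral>\<omega>. pmf (q x z) y * (G \<omega> * of_bool (?a \<omega>)) \<partial>M)"
    by (rule Bochner_Integration.integral_cong) (auto simp: among_first_occurrences_def)
  finally show ?thesis
    by simp
qed

lemma measure_Y_deviates_le: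
  assumes "0 \<le> \<epsilon>"
  shows "measure M (Y_deviates x y z k \<epsilon>) \<le> 2 * exp (- 2 * \<epsilon>\<^sup>2 * k)"
proof -
  let ?a = "among_first_occurrences X Z x z k"
  have "Y_deviates x y z k \<epsilon> = {\<omega> \<in> space M. \<exists>N. selected_count ?a N \<omega> = real k
      \<and> \<epsilon> * k < \<bar>selected_deviation ?a (\<lambda>i \<omega>. Y i \<omega> = y) (pmf (q x z) y) N \<omega>\<bar>}"
    unfolding Y_deviates_def selected_among_first_occurrences_iff ..
  also have "measure M \<dots> \<le> 2 * exp (- 2 * \<epsilon>\<^sup>2 * k)"
  proof (rule selected_deviation_ever_measure_le)
    show "determined (Suc i) (?a i)" if "1 \<le> i" for i
      by (rule among_first_occurrences_determined[OF that])
    show "determined (Suc i) (\<lambda>\<omega>. Y i \<omega> = y)" if "1 \<le> i" for i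
      by (rule determined_comp[OF observation_determined(2)[OF that]])
    show "selected_count ?a N \<omega> \<le> real k" for N \<omega>
      by (simp add: selected_count_among_first_occurrences)
  qed (use assms integral_among_first_occurrences_mult_Y_eq in \<open>simp_all add: pmf_le_1\<close>)
  finally show ?thesis .
qed

lemma card_occurrences_determined:
  assumes K: "determined (Suc N) K"
  shows "determined (Suc N)
    (\<lambda>\<omega>. card {n \<in> {1..N}. cnt_xz X Z n x z \<omega> \<le> K \<omega> \<and> X n \<omega> = x \<and> Y n \<omega> = y \<and> Z n \<omega> = z})"
  unfolding determined_iff
proof (intro allI impI)
  fix \<omega> \<omega>'
  assume agree: "\<forall>i\<in>{1..<Suc N}. X i \<omega> = X i \<omega>' \<and> Y i \<omega> = Y i \<omega>' \<and> Z i \<omega> = Z i \<omega>'"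
  have "K \<omega> = K \<omega>'"
    using K agree unfolding determined_iff by blast
  moreover have "cnt_xz X Z n x z \<omega> = cnt_xz X Z n x z \<omega>'" if "n \<le> N" for n
  proof -
    have "n < Suc N"
      using that by simp
    then show ?thesis
      using cnt_xz_determined[of n "Suc N" x z] agree unfolding determined_iff by blast
  qed
  ultimately show "card {n \<in> {1..N}. cnt_xz X Z n x z \<omega> \<le> K \<omega> \<and> X n \<omega> = x \<and> Y n \<omega> = y \<and> Z n \<omega> = z}
      = card {n \<in> {1..N}. cnt_xz X Z n x z \<omega>' \<le> K \<omega>' \<and> X n \<omega>' = x \<and> Y n \<omega>' = y \<and> Z n \<omega>' = z}"
    using agree by (intro arg_cong[where f = card]) auto
qed

lemma Z_deviates_sets: "Z_deviates z k \<epsilon> \<in> sets M"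
  unfolding Z_deviates_def
  by (rule determined_sets[of "Suc k"], rule determined_comp, rule cnt_z_determined) simp

lemma Y_deviates_sets: "Y_deviates x y z k \<epsilon> \<in> sets M"
  unfolding Y_deviates_def
proof (rule sets.sets_Collect_countable_Ex)
  fix N
  show "{\<omega> \<in> space M. k \<le> cnt_xz X Z N x z \<omega> \<and>
     \<epsilon> * k < \<bar>real (card {n \<in> {1..N}. cnt_xz X Z n x z \<omega> \<le> k \<and> X n \<omega> = x \<and> Y n \<omega> = y \<and> Z n \<omega> = z})
               - k * pmf (q x z) y\<bar>} \<in> sets M"
    by (rule determined_sets[of "Suc N"],
        rule determined_comp2[OF cnt_xz_determined card_occurrences_determined[OF determined_const]]) simp
qed

lemma p_z_est_close:
  assumes "\<omega> \<in> space M" "\<omega> \<notin> Z_deviates z (flr2 N) \<epsilon>"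
  shows "\<bar>p_z_est Z N z \<omega> - pmf \<pi> z\<bar> \<le> \<epsilon>"
proof -
  let ?k = "real (flr2 N)"
  have "\<bar>real (cnt_z Z (flr2 N) z \<omega>) - ?k * pmf \<pi> z\<bar> \<le> \<epsilon> * ?k"
    using assms by (simp add: Z_deviates_def not_less)
  moreover have "p_z_est Z N z \<omega> - pmf \<pi> z = (real (cnt_z Z (flr2 N) z \<omega>) - ?k * pmf \<pi> z) / ?k"
    using flr2_pos[of N] by (simp add: p_z_est_def field_simps)
  ultimately show ?thesis
    using flr2_pos[of N] by (simp add: abs_divide divide_le_eq)
qed

lemma p_y_est_close:
  assumes "\<omega> \<in> space M" "1 \<le> cnt_xz X Z N x z \<omega>"
    and "\<omega> \<notin> Y_deviates x y z (flr2 (cnt_xz X Z N x z \<omega>)) \<epsilon>"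
  shows "\<bar>p_y_est X Y Z N y x z \<omega> - pmf (q x z) y\<bar> \<le> \<epsilon>"
proof -
  let ?m = "flr2 (cnt_xz X Z N x z \<omega>)"
  let ?c = "real (card {n \<in> {1..N}. cnt_xz X Z n x z \<omega> \<le> ?m \<and> X n \<omega> = x \<and> Y n \<omega> = y \<and> Z n \<omega> = z})"
  have "\<bar>?c - ?m * pmf (q x z) y\<bar> \<le> \<epsilon> * ?m"
    using assms flr2_le[OF assms(2)] by (auto simp: Y_deviates_def not_less)
  moreover have "p_y_est X Y Z N y x z \<omega> - pmf (q x z) y = (?c - ?m * pmf (q x z) y) / ?m"
    using flr2_pos[of "cnt_xz X Z N x z \<omega>"] by (simp add: p_y_est_def field_simps)
  ultimately show ?thesis
    using flr2_pos[of "cnt_xz X Z N x z \<omega>"] by (simp add: abs_divide divide_le_eq)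
qed

text \<open>Besides 1, where the radius is infinite, flr2 only takes the values 2^j with j \<ge> 1.\<close>

definition deviation_event :: "real \<Rightarrow> 'x \<Rightarrow> 'y \<Rightarrow> 'w set" where
  "deviation_event \<delta> x y = (\<Union>j. \<Union>z. Z_deviates z (2 ^ Suc j) (radius CARD('z) (2 ^ Suc j) \<delta>)
                                   \<union> Y_deviates x y z (2 ^ Suc j) (radius CARD('z) (2 ^ Suc j) \<delta>))"

lemma estimate_outside_deviation_event:
  assumes \<omega>: "\<omega> \<in> space M - deviation_event \<delta> x y"
  shows "ereal (\<Sum>z\<in>UNIV. pmf (q x z) y * pmf \<pi> z)
           \<in> {ereal (m_est X Y Z N x y \<omega>) - h_est X Z \<delta> N x \<omega>
               .. ereal (m_est X Y Z N x y \<omega>) + h_est X Z \<delta> N x \<omega>}"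
proof (rule estimate_within_h_est)
  have not_deviates:
    "\<omega> \<notin> Z_deviates z k (radius CARD('z) k \<delta>) \<and> \<omega> \<notin> Y_deviates x y z k (radius CARD('z) k \<delta>)"
    if n: "2 \<le> n" and k: "k = flr2 n" for n k z
  proof -
    obtain j where "1 \<le> j" "k = 2 ^ j"
      using flr2_power[OF n] k by auto
    then have "k = 2 ^ Suc (j - 1)"
      by simp
    then show ?thesis
      using \<omega> unfolding deviation_event_def by blast
  qed
  show "\<bar>p_z_est Z N z \<omega> - pmf \<pi> z\<bar> \<le> radius CARD('z) (flr2 N) \<delta>" if "2 \<le> N" for z
    using \<omega> not_deviates[OF that refl] by (intro p_z_est_close) auto
  show "\<bar>p_y_est X Y Z N y x z \<omega> - pmf (q x z) y\<bar> \<le> radius CARD('z) (flr2 (cnt_xz X Z N x z \<omega>)) \<delta>"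
    if "2 \<le> cnt_xz X Z N x z \<omega>" for z
    using \<omega> that not_deviates[OF that refl] by (intro p_y_est_close) auto
qed

lemma measure_deviation_level_le:
  assumes j: "1 \<le> j" and \<delta>: "0 < \<delta>" "\<delta> < 1"
  shows "measure M (\<Union>z. Z_deviates z (2 ^ j) (radius CARD('z) (2 ^ j) \<delta>)
                         \<union> Y_deviates x y z (2 ^ j) (radius CARD('z) (2 ^ j) \<delta>))
         \<le> 4 * \<delta> / (6.6 * j\<^sup>2)"
proof -
  define c where "c = real CARD('z)"
  define r where "r = radius c (2 ^ j) \<delta>"
  have c: "1 \<le> c"
    by (simp add: c_def)
  have r: "0 \<le> r" "2 * exp (- 2 * r\<^sup>2 * real (2 ^ j)) = 2 * \<delta> / (6.6 * c * j\<^sup>2)"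
    using radius_power_sq(2)[of j \<delta> c] exp_radius_power[of j \<delta> c] j \<delta> c by (simp_all add: r_def)
  have "measure M (\<Union>z. Z_deviates z (2 ^ j) r \<union> Y_deviates x y z (2 ^ j) r)
      \<le> (\<Sum>z\<in>UNIV. measure M (Z_deviates z (2 ^ j) r \<union> Y_deviates x y z (2 ^ j) r))"
    using Z_deviates_sets Y_deviates_sets by (intro finite_measure_subadditive_finite) auto
  also have "\<dots> \<le> (\<Sum>z\<in>(UNIV::'z set). 2 * (2 * \<delta> / (6.6 * c * j\<^sup>2)))"
  proof (rule sum_mono)
    fix z
    show "measure M (Z_deviates z (2 ^ j) r \<union> Y_deviates x y z (2 ^ j) r) \<le> 2 * (2 * \<delta> / (6.6 * c * j\<^sup>2))"
      using measure_Un_le[OF Z_deviates_sets Y_deviates_sets, of z "2 ^ j" r x y z "2 ^ j" r]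
        measure_Z_deviates_le[OF r(1), of z "2 ^ j", unfolded r(2)]
        measure_Y_deviates_le[OF r(1), of x y z "2 ^ j", unfolded r(2)]
      by linarith
  qed
  also have "\<dots> = 4 * \<delta> / (6.6 * j\<^sup>2)"
    using c by (simp add: c_def[symmetric] field_simps)
  finally show ?thesis
    by (simp add: r_def c_def)
qed

lemma inverse_squares_constant_le_1: "4 / 6.6 * (pi\<^sup>2 / 6) \<le> (1::real)"
proof -
  have "pi * pi \<le> 3.1415926535899 * 3.1415926535899"
    using pi_approx(2) pi_gt_zero by (intro mult_mono) auto
  then show ?thesis
    by (simp add: power2_eq_square)
qed

lemma measure_deviation_event_le:
  assumes \<delta>: "0 < \<delta>" "\<delta> < 1"
  shows "measure M (deviation_event \<delta> x y) \<le> \<delta>"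
proof -
  define D where "D j = (\<Union>z. Z_deviates z (2 ^ Suc j) (radius CARD('z) (2 ^ Suc j) \<delta>)
                            \<union> Y_deviates x y z (2 ^ Suc j) (radius CARD('z) (2 ^ Suc j) \<delta>))" for j
  define g where "g j = 4 * \<delta> / 6.6 * (1 / (real j + 1)\<^sup>2)" for j
  have D_sets: "D j \<in> sets M" for j
    unfolding D_def using Z_deviates_sets Y_deviates_sets by auto
  have measure_D: "measure M (D j) \<le> g j" for j
    using measure_deviation_level_le[of "Suc j" \<delta> x y] \<delta> by (simp add: D_def g_def add.commute)
  have g_sums: "g sums (4 * \<delta> / 6.6 * (pi\<^sup>2 / 6))"
    unfolding g_def by (rule sums_mult) (use inverse_squares_sums in \<open>simp add: add.commute\<close>)
  have summable: "summable (\<lambda>j. measure M (D j))"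
    by (rule summable_comparison_test'[where N = 0, OF sums_summable[OF g_sums]]) (use measure_D in simp)
  have "measure M (deviation_event \<delta> x y) \<le> (\<Sum>j. measure M (D j))"
    unfolding deviation_event_def D_def[symmetric]
    using D_sets summable by (intro finite_measure_subadditive_countably) auto
  also have "\<dots> \<le> (\<Sum>j. g j)"
    by (rule suminf_le[OF measure_D summable sums_summable[OF g_sums]])
  also have "\<dots> = \<delta> * (4 / 6.6 * (pi\<^sup>2 / 6))"
    using sums_unique[OF g_sums] by simp
  also have "\<dots> \<le> \<delta>"
    using mult_left_mono[OF inverse_squares_constant_le_1, of \<delta>] \<delta> by simp
  finally show ?thesis .
qed

lemma p_z_est_determined: "1 \<le> N \<Longrightarrow> determined (Suc N) (p_z_est Z N z)"
  unfolding p_z_est_def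
  by (rule determined_comp, rule cnt_z_determined) (simp add: flr2_le le_imp_less_Suc)

lemma p_y_est_determined: "determined (Suc N) (p_y_est X Y Z N y x z)"
proof -
  have K: "determined (Suc N) (\<lambda>\<omega>. flr2 (cnt_xz X Z N x z \<omega>))"
    by (rule determined_comp, rule cnt_xz_determined) simp
  show ?thesis
    unfolding p_y_est_def by (rule determined_comp2[OF card_occurrences_determined[OF K] K])
qed

lemma m_est_determined: "1 \<le> N \<Longrightarrow> determined (Suc N) (m_est X Y Z N x y)"
  unfolding m_est_def
  by (intro determined_sum determined_comp2[OF p_z_est_determined p_y_est_determined])

lemma h_est_determined: "determined (Suc N) (h_est X Z \<delta> N x)"
  unfolding h_est_def
  by (intro determined_comp[where h = "\<lambda>s. _ + s"] determined_sum determined_comp[OF cnt_xz_determined]) simp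

lemma estimate_event_sets:
  "{\<omega> \<in> space M. \<forall>N\<ge>1. ereal (\<Sum>z\<in>UNIV. pmf (q x z) y * pmf \<pi> z)
      \<in> {ereal (m_est X Y Z N x y \<omega>) - h_est X Z \<delta> N x \<omega>
          .. ereal (m_est X Y Z N x y \<omega>) + h_est X Z \<delta> N x \<omega>}}
   \<in> sets M"
proof (rule sets.sets_Collect_countable_All)
  fix N :: nat
  show "{\<omega> \<in> space M. 1 \<le> N \<longrightarrow> ereal (\<Sum>z\<in>UNIV. pmf (q x z) y * pmf \<pi> z)
      \<in> {ereal (m_est X Y Z N x y \<omega>) - h_est X Z \<delta> N x \<omega>
          .. ereal (m_est X Y Z N x y \<omega>) + h_est X Z \<delta> N x \<omega>}}
   \<in> sets M"
  proof (cases "1 \<le> N")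
    case True
    show ?thesis
      by (rule determined_sets[of "Suc N"],
          rule determined_comp2[OF m_est_determined[OF True] h_est_determined])
  qed simp
qed

lemma deviation_event_sets: "deviation_event \<delta> x y \<in> sets M"
  unfolding deviation_event_def using Z_deviates_sets Y_deviates_sets by auto

end

theorem theorem5:
  fixes M :: "'w measure"
    and X :: "nat \<Rightarrow> 'w \<Rightarrow> 'x::finite"
    and Y :: "nat \<Rightarrow> 'w \<Rightarrow> 'y::finite"
    and Z :: "nat \<Rightarrow> 'w \<Rightarrow> 'z::finite"
    and \<pi> :: "'z pmf"
    and q :: "'x \<Rightarrow> 'z \<Rightarrow> 'y pmf"
    and \<delta> :: real and xt :: 'x and y :: 'y
  assumes "prob_space M"
    and X_meas: "\<And>n. X n \<in> measurable M (count_space UNIV)"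
    and Y_meas: "\<And>n. Y n \<in> measurable M (count_space UNIV)"
    and Z_meas: "\<And>n. Z n \<in> measurable M (count_space UNIV)"
    and Z_cond: "\<And>n B z. n \<ge> 1 \<Longrightarrow>
        measure M {\<omega> \<in> space M. hist X Y Z n \<omega> \<in> B \<and> Z n \<omega> = z}
        = pmf \<pi> z * measure M {\<omega> \<in> space M. hist X Y Z n \<omega> \<in> B}"
    and Y_cond: "\<And>n B y'. n \<ge> 1 \<Longrightarrow>
        measure M {\<omega> \<in> space M. (hist X Y Z n \<omega>, Z n \<omega>, X n \<omega>) \<in> B \<and> Y n \<omega> = y'}
        = (\<integral>\<omega>. indicator {\<omega> \<in> space M. (hist X Y Z n \<omega>, Z n \<omega>, X n \<omega>) \<in> B} \<omega>
                 * pmf (q (X n \<omega>) (Z n \<omega>)) y' \<partial>M)"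
    and "\<delta> > 0"
  shows "measure M {\<omega> \<in> space M. \<forall>N\<ge>1.
            ereal (\<Sum>z\<in>UNIV. pmf (q xt z) y * pmf \<pi> z)
              \<in> {ereal (m_est X Y Z N xt y \<omega>) - h_est X Z \<delta> N xt \<omega>
                  .. ereal (m_est X Y Z N xt y \<omega>) + h_est X Z \<delta> N xt \<omega>}}
         \<ge> 1 - \<delta>"
proof -
  interpret backdoor_process M X Y Z \<pi> q
    by (rule backdoor_process.intro) fact+
  show ?thesis
  proof (cases "\<delta> < 1")
    case True
    have "1 - \<delta> \<le> 1 - measure M (deviation_event \<delta> xt y)"
      using measure_deviation_event_le[OF \<open>\<delta> > 0\<close> True] by simp
    also have "\<dots> = measure M (space M - deviation_event \<delta> xt y)"
      by (simp add: prob_compl deviation_event_sets)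
    also have "\<dots> \<le> measure M {\<omega> \<in> space M. \<forall>N\<ge>1.
            ereal (\<Sum>z\<in>UNIV. pmf (q xt z) y * pmf \<pi> z)
              \<in> {ereal (m_est X Y Z N xt y \<omega>) - h_est X Z \<delta> N xt \<omega>
                  .. ereal (m_est X Y Z N xt y \<omega>) + h_est X Z \<delta> N xt \<omega>}}"
      using estimate_outside_deviation_event
      by (intro finite_measure_mono[OF _ estimate_event_sets]) blast
    finally show ?thesis .
  next
    case False
    then show ?thesis
      by (meson diff_le_0_iff_le measure_nonneg not_less order_trans)
  qed
qed

end
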